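(* Let $0<\epsilon<1/2$, $C=1-h(\epsilon)$, $0<R<C$, $0<\rho<1$ and $\eta>0$ be fixed, and let $k=\lfloor Rn\rfloor$. Let $\mathcal{T}^{\eta}_{n\times k}=\{\mathbf{A}\in\mathcal{A}_{n\times k}: |W(\mathbf{A})/(nk)-\rho|<\eta\}$, where $W(\mathbf{A})$ is the number of ones of $\mathbf{A}$, equipped with the Bernoulli$(n,k,\rho)$ distribution conditioned on $\mathcal{T}^{\eta}_{n\times k}$. Then, over the BSC with cross-over probability $\epsilon$, \[ \lim_{n\to\infty}\mathbb{E}_{\mathbf{A}\in\mathcal{T}^{\eta}_{n\times k}}\big(p_e(\mathbf{A})\big)=0 . \]
   Context: $h(\epsilon)=-\epsilon\log_2\epsilon-(1-\epsilon)\log_2(1-\epsilon)$. All arithmetic is in $\mathrm{GF}(2)$. For a generating matrix $\mathbf{A}\in\{0,1\}^{n\times k}$, over the BSC the output is $Y=\mathbf{A}X+N$ with $X$ uniform on $\{0,1\}^k$ and $N$ having i.i.d. Bernoulli$(\epsilon)$ entries independent of $X$. The decoder outputs $\hat X$ drawn from the posterior $\mathbb{P}(X=\cdot\mid Y=y)$; $p_c(\mathbf{A})=\mathbb{E}_{X,Y}[\mathbb{P}(X\mid Y)]$ and $p_e(\mathbf{A})=1-p_c(\mathbf{A})$. $\mathcal{A}_{n\times k}$ is the set of binary $n\times k$ matrices, and the Bernoulli$(n,k,\rho)$ distribution on it makes all entries i.i.d. Bernoulli$(\rho)$. *)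

theory Defs
  imports Complex_Main
begin

definition bin_entropy :: "real \<Rightarrow> real" where
  "bin_entropy e = - e * log 2 e - (1 - e) * log 2 (1 - e)"

text \<open>Binary vectors of length m, encoded as functions on nat that are False outside {0..<m}.\<close>
definition bvecs :: "nat \<Rightarrow> (nat \<Rightarrow> bool) set" where
  "bvecs m = {x. \<forall>i. m \<le> i \<longrightarrow> \<not> x i}"

definition bmats :: "nat \<Rightarrow> nat \<Rightarrow> (nat \<Rightarrow> nat \<Rightarrow> bool) set" where
  "bmats n k = {A. \<forall>i j. (n \<le> i \<or> k \<le> j) \<longrightarrow> \<not> A i j}"

definition gf2_mult :: "nat \<Rightarrow> nat \<Rightarrow> (nat \<Rightarrow> nat \<Rightarrow> bool) \<Rightarrow> (nat \<Rightarrow> bool) \<Rightarrow> (nat \<Rightarrow> bool)" where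
  "gf2_mult n k A x = (\<lambda>i. i < n \<and> odd (card {j. j < k \<and> A i j \<and> x j}))"

definition hamming :: "nat \<Rightarrow> (nat \<Rightarrow> bool) \<Rightarrow> (nat \<Rightarrow> bool) \<Rightarrow> nat" where
  "hamming n u v = card {i. i < n \<and> u i \<noteq> v i}"

text \<open>BSC transition probability P(Y = y | X = x) for Y = A x + N, N iid Bernoulli(e).\<close>
definition bsc_lik :: "real \<Rightarrow> nat \<Rightarrow> nat \<Rightarrow> (nat \<Rightarrow> nat \<Rightarrow> bool) \<Rightarrow> (nat \<Rightarrow> bool) \<Rightarrow> (nat \<Rightarrow> bool) \<Rightarrow> real" where
  "bsc_lik e n k A x y =
     (let d = hamming n (gf2_mult n k A x) y in e ^ d * (1 - e) ^ (n - d))"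

text \<open>Joint law P(X = x, Y = y) with X uniform on {0,1}^k.\<close>
definition joint_prob :: "real \<Rightarrow> nat \<Rightarrow> nat \<Rightarrow> (nat \<Rightarrow> nat \<Rightarrow> bool) \<Rightarrow> (nat \<Rightarrow> bool) \<Rightarrow> (nat \<Rightarrow> bool) \<Rightarrow> real" where
  "joint_prob e n k A x y = bsc_lik e n k A x y / 2 ^ k"

definition out_prob :: "real \<Rightarrow> nat \<Rightarrow> nat \<Rightarrow> (nat \<Rightarrow> nat \<Rightarrow> bool) \<Rightarrow> (nat \<Rightarrow> bool) \<Rightarrow> real" where
  "out_prob e n k A y = (\<Sum>x\<in>bvecs k. joint_prob e n k A x y)"

definition posterior :: "real \<Rightarrow> nat \<Rightarrow> nat \<Rightarrow> (nat \<Rightarrow> nat \<Rightarrow> bool) \<Rightarrow> (nat \<Rightarrow> bool) \<Rightarrow> (nat \<Rightarrow> bool) \<Rightarrow> real" where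
  "posterior e n k A x y = joint_prob e n k A x y / out_prob e n k A y"

definition prob_correct :: "real \<Rightarrow> nat \<Rightarrow> nat \<Rightarrow> (nat \<Rightarrow> nat \<Rightarrow> bool) \<Rightarrow> real" where
  "prob_correct e n k A =
     (\<Sum>x\<in>bvecs k. \<Sum>y\<in>bvecs n. joint_prob e n k A x y * posterior e n k A x y)"

definition prob_error :: "real \<Rightarrow> nat \<Rightarrow> nat \<Rightarrow> (nat \<Rightarrow> nat \<Rightarrow> bool) \<Rightarrow> real" where
  "prob_error e n k A = 1 - prob_correct e n k A"

definition mat_weight :: "nat \<Rightarrow> nat \<Rightarrow> (nat \<Rightarrow> nat \<Rightarrow> bool) \<Rightarrow> nat" where
  "mat_weight n k A = card {(i, j). i < n \<and> j < k \<and> A i j}"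

definition bern_mat_prob :: "real \<Rightarrow> nat \<Rightarrow> nat \<Rightarrow> (nat \<Rightarrow> nat \<Rightarrow> bool) \<Rightarrow> real" where
  "bern_mat_prob \<rho> n k A = \<rho> ^ mat_weight n k A * (1 - \<rho>) ^ (n * k - mat_weight n k A)"

definition typical_mats :: "real \<Rightarrow> real \<Rightarrow> nat \<Rightarrow> nat \<Rightarrow> (nat \<Rightarrow> nat \<Rightarrow> bool) set" where
  "typical_mats \<rho> \<eta> n k =
     {A \<in> bmats n k. \<bar>real (mat_weight n k A) / real (n * k) - \<rho>\<bar> < \<eta>}"

definition typical_avg_error :: "real \<Rightarrow> real \<Rightarrow> real \<Rightarrow> nat \<Rightarrow> nat \<Rightarrow> real" where
  "typical_avg_error e \<rho> \<eta> n k =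
     (\<Sum>A\<in>typical_mats \<rho> \<eta> n k. bern_mat_prob \<rho> n k A * prob_error e n k A)
     / (\<Sum>A\<in>typical_mats \<rho> \<eta> n k. bern_mat_prob \<rho> n k A)"

end

theory Submission
  imports Defs
begin

(* Let E(n,k) be the error averaged over the unconditioned Bernoulli ensemble.  The Chernoff bound
   for the matrix weight shows that T has probability at least 1/2 for large n, so the conditioned
   average is at most 2 E(n,k), and it suffices to show E(n, floor(R n)) -> 0.

   For a fixed matrix, output y and sent message x, the posterior error is split over competitors
   x' near x (Hamming distance <= dl k) and far from x.  Near ones are bounded by the Bhattacharyya
   term sqrt(b x b x'), the far mass through a Chernoff tilt of the number of flipped bits.  Averaging
   over the noise and then over the independent rows of the matrix turns every term into a power of
   a one-coordinate quantity.  The result is a sum of three geometric sequences (near competitors,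
   atypical noise, far competitors) whose ratios are below 1 for suitable parameters. *)

(* Functions on nat with values in S below n and constant d from n on; binary vectors and
   matrices are instances.  The induction on n turns sums of products over such tuples into products
   of sums, which is how every average over noise vectors and generator matrices is computed. *)
definition tuples :: "nat \<Rightarrow> 'a set \<Rightarrow> 'a \<Rightarrow> (nat \<Rightarrow> 'a) set" where
  "tuples n S d = {f. (\<forall>i<n. f i \<in> S) \<and> (\<forall>i. n \<le> i \<longrightarrow> f i = d)}"

lemma tuples_0: "tuples 0 S d = {\<lambda>_. d}"
  unfolding tuples_def by auto

lemma tuples_Suc: "tuples (Suc n) S d = (\<lambda>(f, s). f(n := s)) ` (tuples n S d \<times> S)"
proof (rule set_eqI, rule iffI)
  fix g assume g: "g \<in> tuples (Suc n) S d"
  have "g(n := d) \<in> tuples n S d" "g n \<in> S"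
    using g unfolding tuples_def by (auto simp: le_Suc_eq)
  then show "g \<in> (\<lambda>(f, s). f(n := s)) ` (tuples n S d \<times> S)"
    by (intro image_eqI[where x = "(g(n := d), g n)"]) auto
qed (auto simp: tuples_def less_Suc_eq)

lemma tuples_extend_inj: "inj_on (\<lambda>(f, s). f(n := s)) (tuples n S d \<times> S)"
proof (rule inj_onI, clarsimp)
  fix f s f' s' assume f: "f \<in> tuples n S d" "f' \<in> tuples n S d" and eq: "f(n := s) = f'(n := s')"
  have "f i = f' i" for i
    using f fun_cong[OF eq, of i] unfolding tuples_def by (cases "i = n") auto
  then show "f = f' \<and> s = s'" using fun_cong[OF eq, of n] by auto
qed

lemma finite_tuples: "finite S \<Longrightarrow> finite (tuples n S d)"
  by (induction n) (auto simp: tuples_0 tuples_Suc)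

lemma sum_prod_tuples:
  assumes "finite S"
  shows "(\<Sum>f\<in>tuples n S d. \<Prod>i<n. g i (f i)) = (\<Prod>i<n. \<Sum>s\<in>S. (g i s :: real))"
proof (induction n)
  case 0
  then show ?case by (simp add: tuples_0)
next
  case (Suc n)
  have "(\<Sum>f\<in>tuples (Suc n) S d. \<Prod>i<Suc n. g i (f i))
      = (\<Sum>p\<in>tuples n S d \<times> S. \<Prod>i<Suc n. g i ((\<lambda>(f, s). f(n := s)) p i))"
    unfolding tuples_Suc by (rule sum.reindex[OF tuples_extend_inj, unfolded comp_def])
  also have "\<dots> = (\<Sum>(f, s)\<in>tuples n S d \<times> S. (\<Prod>i<n. g i (f i)) * g n s)"
    by (intro sum.cong refl) (auto intro!: prod.cong)
  also have "\<dots> = (\<Sum>f\<in>tuples n S d. \<Prod>i<n. g i (f i)) * (\<Sum>s\<in>S. g n s)"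
    by (simp add: sum.cartesian_product[symmetric] sum_product)
  also have "\<dots> = (\<Prod>i<Suc n. \<Sum>s\<in>S. g i s)"
    using Suc by simp
  finally show ?case .
qed

lemma bvecs_eq_tuples: "bvecs n = tuples n UNIV False"
  unfolding bvecs_def tuples_def by auto

lemma bmats_eq_tuples: "bmats n k = tuples n (bvecs k) (\<lambda>_. False)"
proof (rule set_eqI, rule iffI)
  fix A assume "A \<in> tuples n (bvecs k) (\<lambda>_. False)"
  then have "\<not> A i j" if "n \<le> i \<or> k \<le> j" for i j
    using that unfolding tuples_def bvecs_def by (cases "i < n") auto
  then show "A \<in> bmats n k" unfolding bmats_def by blast
qed (auto simp: bmats_def tuples_def bvecs_def)

lemma finite_bvecs: "finite (bvecs n)"
  unfolding bvecs_eq_tuples by (rule finite_tuples) simp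

lemma finite_bmats: "finite (bmats n k)"
  unfolding bmats_eq_tuples by (rule finite_tuples[OF finite_bvecs])

lemma sum_bvecs_prod:
  "(\<Sum>y\<in>bvecs n. \<Prod>i<n. g i (y i)) = (\<Prod>i<n. g i True + g i False :: real)"
  unfolding bvecs_eq_tuples by (subst sum_prod_tuples) (auto simp: UNIV_bool add.commute)

lemma sum_bmats_prod:
  "(\<Sum>A\<in>bmats n k. \<Prod>i<n. g i (A i)) = (\<Prod>i<n. \<Sum>v\<in>bvecs k. (g i v :: real))"
  unfolding bmats_eq_tuples by (rule sum_prod_tuples[OF finite_bvecs])

lemma card_bvecs: "card (bvecs n) = 2 ^ n"
proof -
  have "real (card (bvecs n)) = (\<Sum>y\<in>bvecs n. \<Prod>i<n. 1)" by simp
  also have "\<dots> = 2 ^ n" by (subst sum_bvecs_prod) simp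
  finally have "real (card (bvecs n)) = real ((2::nat) ^ n)" by simp
  then show ?thesis by (simp only: of_nat_eq_iff)
qed

lemma prod_if_card:
  assumes "finite I"
  shows "(\<Prod>i\<in>I. if P i then a else b) = a ^ card {i\<in>I. P i} * b ^ (card I - card {i\<in>I. P i})"
proof -
  have "I - {i\<in>I. P i} = I \<inter> - {i. P i}" by auto
  moreover have "card (I - {i\<in>I. P i}) = card I - card {i\<in>I. P i}"
    using assms by (subst card_Diff_subset) auto
  moreover have "I \<inter> {i. P i} = {i\<in>I. P i}" by auto
  ultimately show ?thesis
    using assms by (simp add: prod.If_cases)
qed

lemma prod_if_card_lessThan:
  "(\<Prod>i<n. if P i then a else b) = a ^ card {i. i < n \<and> P i} * b ^ (n - card {i. i < n \<and> P i})"
  using prod_if_card[of "{..<n}" P a b] by simp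

lemma power_hamming: "a ^ hamming n u v = (\<Prod>i<n. if u i \<noteq> v i then a else 1)"
  unfolding hamming_def by (simp add: prod_if_card_lessThan)

lemma bsc_lik_prod:
  "bsc_lik e n k A x y = (\<Prod>i<n. if gf2_mult n k A x i \<noteq> y i then e else 1 - e)"
  unfolding bsc_lik_def hamming_def Let_def by (simp add: prod_if_card_lessThan)

lemma bsc_lik_pos: "0 < e \<Longrightarrow> e < 1 \<Longrightarrow> 0 < bsc_lik e n k A x y"
  unfolding bsc_lik_prod by (rule prod_pos) auto

lemma bsc_lik_sum: "(\<Sum>y\<in>bvecs n. bsc_lik e n k A x y) = 1"
  unfolding bsc_lik_prod by (subst sum_bvecs_prod) (simp add: prod.neutral)

lemma joint_prob_sum: "(\<Sum>x\<in>bvecs k. \<Sum>y\<in>bvecs n. joint_prob e n k A x y) = 1"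
  unfolding joint_prob_def
  by (simp add: sum_divide_distrib[symmetric] bsc_lik_sum card_bvecs)

lemma prob_error_eq:
  "prob_error e n k A =
     (\<Sum>x\<in>bvecs k. \<Sum>y\<in>bvecs n. joint_prob e n k A x y * (1 - posterior e n k A x y))"
  unfolding prob_error_def prob_correct_def
  by (simp add: algebra_simps sum_subtractf joint_prob_sum)

lemma prob_error_nonneg:
  assumes "0 < e" "e < 1"
  shows "0 \<le> prob_error e n k A"
proof -
  have "posterior e n k A x y \<le> 1" if "x \<in> bvecs k" for x y
  proof -
    have "0 < joint_prob e n k A x y"
      by (simp add: joint_prob_def bsc_lik_pos[OF assms])
    moreover have "joint_prob e n k A x y \<le> out_prob e n k A y"
      unfolding out_prob_def using that
      by (intro member_le_sum) (auto simp: joint_prob_def bsc_lik_pos[OF assms] less_imp_le finite_bvecs)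
    ultimately show ?thesis
      unfolding posterior_def by (simp add: divide_le_eq_1)
  qed
  then show ?thesis
    unfolding prob_error_eq
    by (intro sum_nonneg mult_nonneg_nonneg) (auto simp: joint_prob_def bsc_lik_pos[OF assms] less_imp_le)
qed

lemma sqrt_prod: "sqrt (\<Prod>i\<in>I. f i) = (\<Prod>i\<in>I. sqrt (f i))"
  by (induction I rule: infinite_finite_induct) (simp_all add: real_sqrt_mult)

lemma noise_avg_sqrt:
  assumes "0 \<le> e" "e \<le> 1"
  shows "(\<Sum>y\<in>bvecs n. sqrt (bsc_lik e n k A x y * bsc_lik e n k A x' y))
       = (\<Prod>i<n. if gf2_mult n k A x i = gf2_mult n k A x' i then 1 else 2 * sqrt (e * (1 - e)))"
proof -
  define c where "c = gf2_mult n k A x"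
  define c' where "c' = gf2_mult n k A x'"
  define w :: "bool \<Rightarrow> bool \<Rightarrow> real" where "w = (\<lambda>b b'. if b \<noteq> b' then e else 1 - e)"
  have "(\<Sum>y\<in>bvecs n. sqrt (bsc_lik e n k A x y * bsc_lik e n k A x' y))
      = (\<Sum>y\<in>bvecs n. \<Prod>i<n. sqrt (w (c i) (y i) * w (c' i) (y i)))"
    unfolding bsc_lik_prod c_def c'_def w_def by (simp add: sqrt_prod flip: prod.distrib)
  also have "\<dots> = (\<Prod>i<n. if c i = c' i then 1 else 2 * sqrt (e * (1 - e)))"
    using assms by (subst sum_bvecs_prod) (intro prod.cong refl, auto simp: w_def mult.commute)
  finally show ?thesis unfolding c_def c'_def .
qed

lemma noise_avg_tilt_self:
  "(\<Sum>y\<in>bvecs n. bsc_lik e n k A x y * s ^ hamming n (gf2_mult n k A x) y) = (1 - e + e * s) ^ n"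
proof -
  have "(\<Sum>y\<in>bvecs n. bsc_lik e n k A x y * s ^ hamming n (gf2_mult n k A x) y)
      = (\<Sum>y\<in>bvecs n. \<Prod>i<n. (if gf2_mult n k A x i \<noteq> y i then e * s else 1 - e))"
    unfolding bsc_lik_prod power_hamming prod.distrib[symmetric] by (intro sum.cong prod.cong) auto
  also have "\<dots> = (\<Prod>i<n. 1 - e + e * s)"
    by (subst sum_bvecs_prod) (intro prod.cong refl, auto)
  finally show ?thesis by simp
qed

lemma noise_avg_tilt_cross:
  "(\<Sum>y\<in>bvecs n. bsc_lik e n k A x' y * r ^ hamming n (gf2_mult n k A x) y)
    = (\<Prod>i<n. if gf2_mult n k A x i = gf2_mult n k A x' i then 1 - e + e * r else (1 - e) * r + e)"
proof -
  define c where "c = gf2_mult n k A x"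
  define c' where "c' = gf2_mult n k A x'"
  have "(\<Sum>y\<in>bvecs n. bsc_lik e n k A x' y * r ^ hamming n c y)
      = (\<Sum>y\<in>bvecs n. \<Prod>i<n. (if c' i \<noteq> y i then e else 1 - e) * (if c i \<noteq> y i then r else 1))"
    unfolding bsc_lik_prod power_hamming c'_def by (simp add: prod.distrib)
  also have "\<dots> = (\<Prod>i<n. if c i = c' i then 1 - e + e * r else (1 - e) * r + e)"
    by (subst sum_bvecs_prod) (intro prod.cong refl, auto)
  finally show ?thesis unfolding c_def c'_def .
qed

definition near_msgs :: "nat \<Rightarrow> real \<Rightarrow> (nat \<Rightarrow> bool) \<Rightarrow> (nat \<Rightarrow> bool) set" where
  "near_msgs k dl x = {x' \<in> bvecs k. x' \<noteq> x \<and> real (hamming k x x') \<le> dl * real k}"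

definition far_msgs :: "nat \<Rightarrow> real \<Rightarrow> (nat \<Rightarrow> bool) \<Rightarrow> (nat \<Rightarrow> bool) set" where
  "far_msgs k dl x = {x' \<in> bvecs k. dl * real k < real (hamming k x x')}"

lemma near_far_partition:
  assumes "0 \<le> dl"
  shows "bvecs k - {x} = near_msgs k dl x \<union> far_msgs k dl x"
    and "near_msgs k dl x \<inter> far_msgs k dl x = {}"
  using assms by (auto simp: near_msgs_def far_msgs_def hamming_def not_le mult_less_0_iff)

(* Elementary inequality behind the Bhattacharyya bound. *)
lemma mult_div_le_sqrt:
  fixes u v S :: real
  assumes "0 \<le> u" "0 \<le> v" "u \<le> S" "v \<le> S"
  shows "u * v / S \<le> sqrt (u * v)"
proof (cases "S = 0")
  case False
  have "sqrt (u * v) \<le> sqrt (S * S)"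
    using assms by (intro real_sqrt_le_mono mult_mono) auto
  then have "sqrt (u * v) \<le> S" using assms by simp
  moreover have "u * v = sqrt (u * v) * sqrt (u * v)" using assms by simp
  moreover have "0 \<le> sqrt (u * v)" using assms by simp
  ultimately have "u * v \<le> sqrt (u * v) * S"
    by (metis mult_left_mono)
  then show ?thesis using False assms by (simp add: divide_le_eq)
qed (use assms in simp)

lemma posterior_error_split:
  fixes b :: "'a \<Rightarrow> real"
  assumes X: "finite X" "x \<in> X" and b: "\<And>z. z \<in> X \<Longrightarrow> 0 \<le> b z" "0 < b x"
    and part: "X - {x} = N \<union> F" "N \<inter> F = {}"
  shows "b x * (1 - b x / sum b X) \<le> (\<Sum>z\<in>N. sqrt (b x * b z)) + min (b x) (sum b F)"
proof -
  have fin: "finite N" "finite F" using X(1) part(1) by (metis finite_Diff finite_Un)+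
  have sub: "N \<subseteq> X" "F \<subseteq> X" using part(1) by auto
  have S: "sum b X = b x + sum b N + sum b F"
    using X part fin by (simp add: sum.remove sum.union_disjoint)
  have Sb: "b z \<le> sum b X" if "z \<in> X" for z
    using X(1) that b(1) by (intro member_le_sum) auto
  have S0: "0 < sum b X" using Sb[OF X(2)] b(2) by simp
  have NF: "0 \<le> sum b N" "0 \<le> sum b F" using b(1) sub by (auto intro: sum_nonneg)
  have "1 - b x / sum b X = (sum b N + sum b F) / sum b X"
    using S0 by (simp add: S field_simps)
  then have "b x * (1 - b x / sum b X) = b x * sum b N / sum b X + b x * sum b F / sum b X"
    by (simp add: add_divide_distrib distrib_left)
  also have "b x * sum b N / sum b X = (\<Sum>z\<in>N. b x * b z / sum b X)"
    by (simp add: sum_distrib_left sum_divide_distrib)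
  also have "(\<Sum>z\<in>N. b x * b z / sum b X) \<le> (\<Sum>z\<in>N. sqrt (b x * b z))"
    using sub b by (intro sum_mono mult_div_le_sqrt Sb) (auto simp: X(2))
  also have "b x * sum b F / sum b X \<le> min (b x) (sum b F)"
  proof (rule min.boundedI)
    have "b x * sum b F \<le> b x * sum b X" using b(2) NF by (simp add: S)
    then show "b x * sum b F / sum b X \<le> b x" using S0 by (simp add: divide_le_eq)
    have "b x * sum b F \<le> sum b X * sum b F" using NF by (simp add: S mult_right_mono)
    then show "b x * sum b F / sum b X \<le> sum b F" using S0 by (simp add: divide_le_eq mult.commute)
  qed
  finally show ?thesis by simp
qed

(* A min is bounded by either argument times a weight that is >= 1 on the relevant side of
   the threshold t: this is the Chernoff device that handles the far competitors. *)
lemma min_le_tilted: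
  fixes u v s r t :: real
  assumes uv: "0 \<le> u" "0 \<le> v" and s: "1 < s" and r: "0 < r" "r < 1"
  shows "min u v \<le> u * s ^ d * s powr (- t) + r powr (- t) * (v * r ^ d)"
proof -
  have tilt_u: "0 \<le> u * s ^ d * s powr (- t)" and tilt_v: "0 \<le> r powr (- t) * (v * r ^ d)"
    using uv s r by simp_all
  show ?thesis
  proof (cases "t < real d")
    case True
    have "1 \<le> s powr (real d - t)" using True s by (intro ge_one_powr_ge_zero) auto
    also have "s powr (real d - t) = s ^ d * s powr (- t)"
      using s by (simp add: powr_diff powr_realpow powr_minus divide_inverse)
    finally have "u \<le> u * (s ^ d * s powr (- t))"
      using uv(1) by (simp add: mult_le_cancel_left1)
    then show ?thesis using tilt_v by (simp add: mult.assoc min.coboundedI1)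
  next
    case False
    have "r powr 0 \<le> r powr (real d - t)" using False r by (intro powr_mono') auto
    also have "r powr (real d - t) = r ^ d * r powr (- t)"
      using r by (simp add: powr_diff powr_realpow powr_minus divide_inverse)
    finally have "v \<le> v * (r ^ d * r powr (- t))"
      using uv(2) r by (simp add: mult_le_cancel_left1)
    then show ?thesis using tilt_u by (simp add: mult_ac min.coboundedI2)
  qed
qed

lemma error_term_bound:
  fixes n k :: nat and A :: "nat \<Rightarrow> nat \<Rightarrow> bool" and x y :: "nat \<Rightarrow> bool"
  assumes e: "0 < e" "e < 1 / 2" and s: "1 < s" and dl: "0 \<le> dl" and x: "x \<in> bvecs k"
  defines "r \<equiv> e / (1 - e)"
    and "b \<equiv> \<lambda>x'. bsc_lik e n k A x' y"
    and "d \<equiv> hamming n (gf2_mult n k A x) y"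
  shows "joint_prob e n k A x y * (1 - posterior e n k A x y) * 2 ^ k
    \<le> (\<Sum>x'\<in>near_msgs k dl x. sqrt (b x * b x'))
      + b x * s ^ d * s powr (- t)
      + r powr (- t) * (\<Sum>x'\<in>far_msgs k dl x. b x' * r ^ d)"
proof -
  have b_pos: "0 < b x'" for x' unfolding b_def using e by (intro bsc_lik_pos) auto
  have r: "0 < r" "r < 1" unfolding r_def using e by (auto simp: divide_less_eq)
  have "joint_prob e n k A x y * (1 - posterior e n k A x y) * 2 ^ k
      = b x * (1 - b x / sum b (bvecs k))"
    unfolding posterior_def joint_prob_def out_prob_def b_def
    by (simp add: sum_divide_distrib[symmetric])
  also have "\<dots> \<le> (\<Sum>x'\<in>near_msgs k dl x. sqrt (b x * b x')) + min (b x) (sum b (far_msgs k dl x))"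
    using b_pos near_far_partition[OF dl]
    by (intro posterior_error_split[OF finite_bvecs x]) (auto intro: less_imp_le)
  also have "min (b x) (sum b (far_msgs k dl x))
      \<le> b x * s ^ d * s powr (- t) + r powr (- t) * (sum b (far_msgs k dl x) * r ^ d)"
    using b_pos s r by (intro min_le_tilted sum_nonneg less_imp_le) auto
  finally show ?thesis by (simp add: sum_distrib_right add.assoc)
qed

definition agree_prod ::
    "nat \<Rightarrow> nat \<Rightarrow> (nat \<Rightarrow> nat \<Rightarrow> bool) \<Rightarrow> (nat \<Rightarrow> bool) \<Rightarrow> (nat \<Rightarrow> bool) \<Rightarrow> real \<Rightarrow> real \<Rightarrow> real" where
  "agree_prod n k A x x' P Q = (\<Prod>i<n. if gf2_mult n k A x i = gf2_mult n k A x' i then P else Q)"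

lemma prob_error_bound:
  assumes e: "0 < e" "e < 1 / 2" and s: "1 < s" and dl: "0 \<le> dl"
  defines "r \<equiv> e / (1 - e)"
  shows "prob_error e n k A \<le> (\<Sum>x\<in>bvecs k.
      (\<Sum>x'\<in>near_msgs k dl x. agree_prod n k A x x' 1 (2 * sqrt (e * (1 - e))))
    + (1 - e + e * s) ^ n * s powr (- t)
    + r powr (- t) * (\<Sum>x'\<in>far_msgs k dl x. agree_prod n k A x x' (1 - e + e * r) ((1 - e) * r + e))) / 2 ^ k"
    (is "_ \<le> ?bound")
proof -
  define b where "b = (\<lambda>x' y. bsc_lik e n k A x' y)"
  define d where "d = (\<lambda>x y. hamming n (gf2_mult n k A x) y)"
  have "prob_error e n k A = (\<Sum>x\<in>bvecs k. \<Sum>y\<in>bvecs n.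
      joint_prob e n k A x y * (1 - posterior e n k A x y) * 2 ^ k) / 2 ^ k"
    unfolding prob_error_eq by (simp add: sum_divide_distrib)
  also have "\<dots> \<le> (\<Sum>x\<in>bvecs k. \<Sum>y\<in>bvecs n.
        (\<Sum>x'\<in>near_msgs k dl x. sqrt (b x y * b x' y))
      + b x y * s ^ d x y * s powr (- t)
      + r powr (- t) * (\<Sum>x'\<in>far_msgs k dl x. b x' y * r ^ d x y)) / 2 ^ k"
    unfolding b_def d_def r_def
    by (intro divide_right_mono sum_mono error_term_bound[OF e s dl]) auto
  also have "\<dots> = (\<Sum>x\<in>bvecs k.
        (\<Sum>x'\<in>near_msgs k dl x. \<Sum>y\<in>bvecs n. sqrt (b x y * b x' y))
      + (\<Sum>y\<in>bvecs n. b x y * s ^ d x y) * s powr (- t)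
      + r powr (- t) * (\<Sum>x'\<in>far_msgs k dl x. \<Sum>y\<in>bvecs n. b x' y * r ^ d x y)) / 2 ^ k"
    by (simp add: sum.distrib sum_distrib_left sum_distrib_right sum.swap[of _ "bvecs n"])
  also have "\<dots> = ?bound"
    using e unfolding b_def d_def
    by (simp add: noise_avg_sqrt noise_avg_tilt_self noise_avg_tilt_cross agree_prod_def)
  finally show ?thesis .
qed

definition row_prob :: "real \<Rightarrow> nat \<Rightarrow> (nat \<Rightarrow> bool) \<Rightarrow> real" where
  "row_prob \<rho> k v = (\<Prod>j<k. if v j then \<rho> else 1 - \<rho>)"

lemma bern_mat_prob_rows: "bern_mat_prob \<rho> n k A = (\<Prod>i<n. row_prob \<rho> k (A i))"
proof -
  have fin: "finite ({..<n} \<times> {..<k})" by simp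
  have W: "mat_weight n k A = card {p \<in> {..<n} \<times> {..<k}. A (fst p) (snd p)}"
    unfolding mat_weight_def by (rule arg_cong[where f = card]) auto
  have "(\<Prod>i<n. row_prob \<rho> k (A i))
      = (\<Prod>p\<in>{..<n} \<times> {..<k}. if A (fst p) (snd p) then \<rho> else 1 - \<rho>)"
    unfolding row_prob_def by (subst prod.cartesian_product) (simp add: case_prod_beta)
  also have "\<dots> = bern_mat_prob \<rho> n k A"
    unfolding prod_if_card[OF fin] bern_mat_prob_def W by (simp add: card_cartesian_product)
  finally show ?thesis by simp
qed

lemma bern_mat_prob_nonneg: "0 \<le> \<rho> \<Longrightarrow> \<rho> \<le> 1 \<Longrightarrow> 0 \<le> bern_mat_prob \<rho> n k A"
  unfolding bern_mat_prob_def by simp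

lemma parity_agree_iff:
  fixes v x x' :: "nat \<Rightarrow> bool"
  shows "(odd (card {j. j < k \<and> v j \<and> x j}) = odd (card {j. j < k \<and> v j \<and> x' j}))
     \<longleftrightarrow> even (card {j. j < k \<and> v j \<and> x j \<noteq> x' j})"
proof -
  define S where "S = {j. j < k \<and> v j \<and> x j}"
  define T where "T = {j. j < k \<and> v j \<and> x' j}"
  have fin: "finite S" "finite T" unfolding S_def T_def by auto
  have D: "{j. j < k \<and> v j \<and> x j \<noteq> x' j} = (S \<union> T) - (S \<inter> T)" unfolding S_def T_def by auto
  have "card ((S \<union> T) - (S \<inter> T)) = card (S \<union> T) - card (S \<inter> T)"
    using fin by (intro card_Diff_subset) auto
  moreover have "card S + card T = card (S \<union> T) + card (S \<inter> T)" by (rule card_Un_Int[OF fin])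
  moreover have "card (S \<inter> T) \<le> card (S \<union> T)" using fin by (intro card_mono) auto
  ultimately have "card S + card T = card {j. j < k \<and> v j \<and> x j \<noteq> x' j} + 2 * card (S \<inter> T)"
    unfolding D by simp
  then have "even (card S + card T) \<longleftrightarrow> even (card {j. j < k \<and> v j \<and> x j \<noteq> x' j})" by simp
  then show ?thesis unfolding S_def[symmetric] T_def[symmetric] by auto
qed

lemma row_prob_sum: "(\<Sum>v\<in>bvecs k. row_prob \<rho> k v) = 1"
  unfolding row_prob_def by (subst sum_bvecs_prod) simp

lemma row_prob_sign_sum:
  "(\<Sum>v\<in>bvecs k. row_prob \<rho> k v * (-1) ^ card {j. j < k \<and> v j \<and> x j \<noteq> x' j})
     = (1 - 2 * \<rho>) ^ hamming k x x'"
proof -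
  have "(\<Sum>v\<in>bvecs k. row_prob \<rho> k v * (-1) ^ card {j. j < k \<and> v j \<and> x j \<noteq> x' j})
     = (\<Sum>v\<in>bvecs k. \<Prod>j<k. (if v j then \<rho> else 1 - \<rho>) * (if v j \<and> x j \<noteq> x' j then -1 else 1))"
    unfolding row_prob_def by (simp add: prod.distrib prod_if_card_lessThan)
  also have "\<dots> = (\<Prod>j<k. if x j \<noteq> x' j then 1 - 2 * \<rho> else 1)"
    by (subst sum_bvecs_prod) (intro prod.cong refl, auto)
  also have "\<dots> = (1 - 2 * \<rho>) ^ hamming k x x'" by (simp add: power_hamming)
  finally show ?thesis .
qed

(* Expected agreement factor of one random row for two messages at input distance w. *)
definition mixture :: "real \<Rightarrow> real \<Rightarrow> real \<Rightarrow> nat \<Rightarrow> real" where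
  "mixture P Q \<theta> w = (P + Q) / 2 + (P - Q) / 2 * \<theta> ^ w"

lemma row_agree_expectation:
  "(\<Sum>v\<in>bvecs k. row_prob \<rho> k v *
      (if odd (card {j. j < k \<and> v j \<and> x j}) = odd (card {j. j < k \<and> v j \<and> x' j}) then P else Q))
   = mixture P Q (1 - 2 * \<rho>) (hamming k x x')"
proof -
  define \<sigma> :: "(nat \<Rightarrow> bool) \<Rightarrow> real" where "\<sigma> v = (-1) ^ card {j. j < k \<and> v j \<and> x j \<noteq> x' j}" for v
  define a c where "a = (P + Q) / 2" and "c = (P - Q) / 2"
  have "(if odd (card {j. j < k \<and> v j \<and> x j}) = odd (card {j. j < k \<and> v j \<and> x' j}) then P else Q)
      = a + c * \<sigma> v" for v
    unfolding \<sigma>_def parity_agree_iff a_def c_def by (auto simp: field_simps)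
  then have "(\<Sum>v\<in>bvecs k. row_prob \<rho> k v *
      (if odd (card {j. j < k \<and> v j \<and> x j}) = odd (card {j. j < k \<and> v j \<and> x' j}) then P else Q))
    = (\<Sum>v\<in>bvecs k. a * row_prob \<rho> k v + c * (row_prob \<rho> k v * \<sigma> v))"
    by (simp add: algebra_simps)
  also have "\<dots> = a * (\<Sum>v\<in>bvecs k. row_prob \<rho> k v) + c * (\<Sum>v\<in>bvecs k. row_prob \<rho> k v * \<sigma> v)"
    by (simp add: sum.distrib sum_distrib_left)
  finally show ?thesis
    unfolding row_prob_sum \<sigma>_def row_prob_sign_sum a_def c_def mixture_def by simp
qed

(* Averaging the agreement product over a Bernoulli matrix: rows are independent. *)
lemma expected_agree_prod:
  "(\<Sum>A\<in>bmats n k. bern_mat_prob \<rho> n k A * agree_prod n k A x x' P Q)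
   = mixture P Q (1 - 2 * \<rho>) (hamming k x x') ^ n"
proof -
  have "(\<Sum>A\<in>bmats n k. bern_mat_prob \<rho> n k A * agree_prod n k A x x' P Q)
    = (\<Sum>A\<in>bmats n k. \<Prod>i<n. row_prob \<rho> k (A i) *
      (if odd (card {j. j < k \<and> A i j \<and> x j}) = odd (card {j. j < k \<and> A i j \<and> x' j}) then P else Q))"
    unfolding bern_mat_prob_rows agree_prod_def prod.distrib[symmetric] gf2_mult_def
    by (intro sum.cong refl prod.cong) auto
  also have "\<dots> = mixture P Q (1 - 2 * \<rho>) (hamming k x x') ^ n"
    by (subst sum_bmats_prod) (simp only: row_agree_expectation prod_constant card_lessThan)
  finally show ?thesis .
qed

lemma bern_mat_prob_sum: "(\<Sum>A\<in>bmats n k. bern_mat_prob \<rho> n k A) = 1"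
  using expected_agree_prod[of \<rho> n k x x 1 1] by (simp add: agree_prod_def mixture_def)

lemma bern_weight_mgf:
  "(\<Sum>A\<in>bmats n k. bern_mat_prob \<rho> n k A * \<tau> ^ mat_weight n k A) = (1 - \<rho> + \<rho> * \<tau>) ^ (n * k)"
proof -
  have tau_pow: "\<tau> ^ mat_weight n k A = (\<Prod>i<n. \<Prod>j<k. if A i j then \<tau> else 1)" for A
  proof -
    have fin: "finite ({..<n} \<times> {..<k})" by simp
    have W: "mat_weight n k A = card {p \<in> {..<n} \<times> {..<k}. A (fst p) (snd p)}"
      unfolding mat_weight_def by (rule arg_cong[where f = card]) auto
    show ?thesis unfolding W
      by (subst prod.cartesian_product) (simp add: case_prod_beta prod_if_card[OF fin])
  qed
  have "(\<Sum>A\<in>bmats n k. bern_mat_prob \<rho> n k A * \<tau> ^ mat_weight n k A)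
     = (\<Sum>A\<in>bmats n k. \<Prod>i<n. \<Prod>j<k. (if A i j then \<rho> else 1 - \<rho>) * (if A i j then \<tau> else 1))"
    unfolding bern_mat_prob_rows tau_pow row_prob_def prod.distrib by simp
  also have "\<dots> = (\<Prod>i<n. \<Sum>v\<in>bvecs k. \<Prod>j<k. (if v j then \<rho> else 1 - \<rho>) * (if v j then \<tau> else 1))"
    by (rule sum_bmats_prod)
  also have "\<dots> = (\<Prod>i<n. (1 - \<rho> + \<rho> * \<tau>) ^ k)"
    by (subst sum_bvecs_prod) (simp add: algebra_simps)
  also have "\<dots> = (1 - \<rho> + \<rho> * \<tau>) ^ (n * k)"
    by (simp add: power_mult mult.commute)
  finally show ?thesis .
qed

definition ensemble_error :: "real \<Rightarrow> real \<Rightarrow> nat \<Rightarrow> nat \<Rightarrow> real" where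
  "ensemble_error e \<rho> n k = (\<Sum>A\<in>bmats n k. bern_mat_prob \<rho> n k A * prob_error e n k A)"

lemma sum_weighted_swap:
  "(\<Sum>a\<in>S. w a * (\<Sum>x\<in>X. f a x)) = (\<Sum>x\<in>X. \<Sum>a\<in>S. w a * f a x :: real)"
  by (simp add: sum_distrib_left) (rule sum.swap)

lemma ensemble_error_le:
  assumes e: "0 < e" "e < 1 / 2" and s: "1 < s" and dl: "0 \<le> dl" and \<rho>: "0 \<le> \<rho>" "\<rho> \<le> 1"
  defines "r \<equiv> e / (1 - e)" and "\<theta> \<equiv> 1 - 2 * \<rho>"
  shows "ensemble_error e \<rho> n k \<le> (\<Sum>x\<in>bvecs k.
      (\<Sum>x'\<in>near_msgs k dl x. mixture 1 (2 * sqrt (e * (1 - e))) \<theta> (hamming k x x') ^ n)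
    + (1 - e + e * s) ^ n * s powr (- t)
    + r powr (- t) * (\<Sum>x'\<in>far_msgs k dl x. mixture (1 - e + e * r) ((1 - e) * r + e) \<theta> (hamming k x x') ^ n)) / 2 ^ k"
    (is "_ \<le> (\<Sum>x\<in>bvecs k. ?H x) / 2 ^ k")
proof -
  define Z where "Z = 2 * sqrt (e * (1 - e))"
  define A0 A1 where "A0 = 1 - e + e * r" and "A1 = (1 - e) * r + e"
  define G where "G A x = (\<Sum>x'\<in>near_msgs k dl x. agree_prod n k A x x' 1 Z)
    + (1 - e + e * s) ^ n * s powr (- t)
    + r powr (- t) * (\<Sum>x'\<in>far_msgs k dl x. agree_prod n k A x x' A0 A1)" for A x
  have averaged: "(\<Sum>A\<in>bmats n k. bern_mat_prob \<rho> n k A * G A x) = ?H x" for x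
  proof -
    have "(\<Sum>A\<in>bmats n k. bern_mat_prob \<rho> n k A * G A x)
      = (\<Sum>A\<in>bmats n k. bern_mat_prob \<rho> n k A * (\<Sum>x'\<in>near_msgs k dl x. agree_prod n k A x x' 1 Z))
      + (1 - e + e * s) ^ n * s powr (- t) * (\<Sum>A\<in>bmats n k. bern_mat_prob \<rho> n k A)
      + r powr (- t) * (\<Sum>A\<in>bmats n k. bern_mat_prob \<rho> n k A * (\<Sum>x'\<in>far_msgs k dl x. agree_prod n k A x x' A0 A1))"
      unfolding G_def by (simp add: distrib_left sum.distrib sum_distrib_left sum_distrib_right mult_ac)
    then show ?thesis
      by (simp add: sum_weighted_swap bern_mat_prob_sum expected_agree_prod Z_def A0_def A1_def \<theta>_def)
  qed
  have "ensemble_error e \<rho> n k \<le> (\<Sum>A\<in>bmats n k. bern_mat_prob \<rho> n k A * ((\<Sum>x\<in>bvecs k. G A x) / 2 ^ k))"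
    unfolding ensemble_error_def G_def Z_def A0_def A1_def r_def
    by (intro sum_mono mult_left_mono prob_error_bound[OF e s dl] bern_mat_prob_nonneg[OF \<rho>])
  also have "\<dots> = (\<Sum>x\<in>bvecs k. \<Sum>A\<in>bmats n k. bern_mat_prob \<rho> n k A * G A x) / 2 ^ k"
    by (simp add: sum_divide_distrib[symmetric] sum_weighted_swap)
  also have "\<dots> = (\<Sum>x\<in>bvecs k. ?H x) / 2 ^ k"
    using averaged by simp
  finally show ?thesis .
qed

lemma mixture_bounds:
  assumes "0 \<le> P" "0 \<le> Q" "\<bar>\<theta>\<bar> \<le> 1"
  shows "0 \<le> mixture P Q \<theta> w" "mixture P Q \<theta> w \<le> (P + Q) / 2 + \<bar>P - Q\<bar> / 2 * \<bar>\<theta>\<bar> ^ w"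
proof -
  have "\<bar>\<theta> ^ w\<bar> \<le> 1" using assms(3) by (simp add: power_abs power_le_one)
  then have "0 \<le> 1 + \<theta> ^ w" "0 \<le> 1 - \<theta> ^ w" by (simp_all add: abs_le_iff)
  then have "0 \<le> (P * (1 + \<theta> ^ w) + Q * (1 - \<theta> ^ w)) / 2" using assms(1,2) by simp
  also have "\<dots> = mixture P Q \<theta> w"
    unfolding mixture_def by (simp add: field_simps)
  finally show "0 \<le> mixture P Q \<theta> w" .
  show "mixture P Q \<theta> w \<le> (P + Q) / 2 + \<bar>P - Q\<bar> / 2 * \<bar>\<theta>\<bar> ^ w"
    using abs_ge_self[of "(P - Q) / 2 * \<theta> ^ w"] unfolding mixture_def by (simp add: abs_mult power_abs)
qed

lemma abs_power_le_powr:
  fixes \<theta> a :: real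
  assumes "\<bar>\<theta>\<bar> \<le> 1" "a \<le> real w" "1 \<le> w"
  shows "\<bar>\<theta>\<bar> ^ w \<le> \<bar>\<theta>\<bar> powr a"
proof (cases "\<theta> = 0")
  case False
  then have "\<bar>\<theta>\<bar> powr real w \<le> \<bar>\<theta>\<bar> powr a" using assms by (intro powr_mono') auto
  then show ?thesis using False by (simp add: powr_realpow)
qed (use assms in \<open>simp add: power_0_left\<close>)

lemma hamming_pos:
  assumes "x \<in> bvecs k" "x' \<in> bvecs k" "x' \<noteq> x"
  shows "1 \<le> hamming k x x'"
proof -
  obtain i where i: "x i \<noteq> x' i" using assms(3) by auto
  then have "i < k" using assms(1,2) unfolding bvecs_def by (rule_tac ccontr) auto
  then have "card {i} \<le> card {i. i < k \<and> x i \<noteq> x' i}" using i by (intro card_mono) auto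
  then show ?thesis unfolding hamming_def by simp
qed

lemma sum_power_hamming: "(\<Sum>x'\<in>bvecs k. lam ^ hamming k x x') = (1 + lam :: real) ^ k"
proof -
  have "(\<Sum>x'\<in>bvecs k. lam ^ hamming k x x') = (\<Sum>x'\<in>bvecs k. \<Prod>i<k. if x i \<noteq> x' i then lam else 1)"
    by (simp add: power_hamming)
  also have "\<dots> = (\<Prod>i<k. 1 + lam)" by (subst sum_bvecs_prod) (intro prod.cong refl, auto)
  finally show ?thesis by simp
qed

lemma card_near_msgs:
  fixes lam dl :: real
  assumes "0 < lam" "lam \<le> 1"
  shows "real (card (near_msgs k dl x)) \<le> (1 + lam) ^ k * lam powr (- (dl * k))"
proof -
  have one_le: "1 \<le> lam ^ hamming k x x' * lam powr (- (dl * k))" if "x' \<in> near_msgs k dl x" for x'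
  proof -
    have "lam powr (dl * k) \<le> lam powr real (hamming k x x')"
      using that assms unfolding near_msgs_def by (intro powr_mono') auto
    then have "lam powr (dl * k) * lam powr (- (dl * k)) \<le> lam ^ hamming k x x' * lam powr (- (dl * k))"
      using assms by (simp add: powr_realpow mult_right_mono)
    then show ?thesis using assms by (simp flip: powr_add)
  qed
  have "real (card (near_msgs k dl x)) = (\<Sum>x'\<in>near_msgs k dl x. 1)" by simp
  also have "\<dots> \<le> (\<Sum>x'\<in>near_msgs k dl x. lam ^ hamming k x x' * lam powr (- (dl * k)))"
    by (rule sum_mono[OF one_le])
  also have "\<dots> \<le> (\<Sum>x'\<in>bvecs k. lam ^ hamming k x x' * lam powr (- (dl * k)))"
    using assms by (intro sum_mono2[OF finite_bvecs]) (auto simp: near_msgs_def)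
  also have "\<dots> = (1 + lam) ^ k * lam powr (- (dl * k))"
    by (simp add: sum_distrib_right[symmetric] sum_power_hamming)
  finally show ?thesis .
qed

lemma card_far_msgs: "real (card (far_msgs k dl x)) \<le> 2 ^ k"
proof -
  have "card (far_msgs k dl x) \<le> card (bvecs k)"
    by (rule card_mono[OF finite_bvecs]) (auto simp: far_msgs_def)
  then show ?thesis by (simp add: card_bvecs)
qed

lemma near_mixture_sum_bound:
  assumes x: "x \<in> bvecs k" and PQ: "0 \<le> P" "0 \<le> Q" and \<theta>: "\<bar>\<theta>\<bar> \<le> 1" and lam: "0 < lam" "lam \<le> 1"
  shows "(\<Sum>x'\<in>near_msgs k dl x. mixture P Q \<theta> (hamming k x x') ^ n)
    \<le> (1 + lam) ^ k * lam powr (- (dl * k)) * ((P + Q) / 2 + \<bar>P - Q\<bar> / 2 * \<bar>\<theta>\<bar>) ^ n"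
proof -
  have "mixture P Q \<theta> (hamming k x x') \<le> (P + Q) / 2 + \<bar>P - Q\<bar> / 2 * \<bar>\<theta>\<bar>"
    if "x' \<in> near_msgs k dl x" for x'
  proof -
    have w: "1 \<le> hamming k x x'" using that hamming_pos[OF x] unfolding near_msgs_def by auto
    have "\<bar>\<theta>\<bar> ^ hamming k x x' \<le> \<bar>\<theta>\<bar> powr 1"
      using w \<theta> by (intro abs_power_le_powr) auto
    then have "\<bar>P - Q\<bar> / 2 * \<bar>\<theta>\<bar> ^ hamming k x x' \<le> \<bar>P - Q\<bar> / 2 * \<bar>\<theta>\<bar>"
      by (simp add: mult_left_mono)
    then show ?thesis using mixture_bounds(2)[OF PQ \<theta>] by (meson add_left_mono order_trans)
  qed
  then have "(\<Sum>x'\<in>near_msgs k dl x. mixture P Q \<theta> (hamming k x x') ^ n)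
      \<le> real (card (near_msgs k dl x)) * ((P + Q) / 2 + \<bar>P - Q\<bar> / 2 * \<bar>\<theta>\<bar>) ^ n"
    using sum_mono[where K = "near_msgs k dl x" and g = "\<lambda>_. ((P + Q) / 2 + \<bar>P - Q\<bar> / 2 * \<bar>\<theta>\<bar>) ^ n"]
    by (simp add: power_mono mixture_bounds(1)[OF PQ \<theta>])
  also have "\<dots> \<le> (1 + lam) ^ k * lam powr (- (dl * k)) * ((P + Q) / 2 + \<bar>P - Q\<bar> / 2 * \<bar>\<theta>\<bar>) ^ n"
    using PQ by (intro mult_right_mono card_near_msgs[OF lam]) auto
  finally show ?thesis .
qed

lemma far_mixture_sum_bound:
  assumes PQ: "0 \<le> P" "0 \<le> Q" and \<theta>: "\<bar>\<theta>\<bar> \<le> 1" and dl: "0 \<le> dl"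
  shows "(\<Sum>x'\<in>far_msgs k dl x. mixture P Q \<theta> (hamming k x x') ^ n)
    \<le> 2 ^ k * ((P + Q) / 2 + \<bar>P - Q\<bar> / 2 * \<bar>\<theta>\<bar> powr (dl * k)) ^ n"
proof -
  have "mixture P Q \<theta> (hamming k x x') \<le> (P + Q) / 2 + \<bar>P - Q\<bar> / 2 * \<bar>\<theta>\<bar> powr (dl * k)"
    if "x' \<in> far_msgs k dl x" for x'
  proof -
    have w: "dl * k < real (hamming k x x')" using that unfolding far_msgs_def by auto
    moreover have "0 \<le> dl * k" using dl by simp
    ultimately have "(0::real) < real (hamming k x x')" by linarith
    then have "\<bar>\<theta>\<bar> ^ hamming k x x' \<le> \<bar>\<theta>\<bar> powr (dl * k)"
      using w \<theta> by (intro abs_power_le_powr) auto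
    then have "\<bar>P - Q\<bar> / 2 * \<bar>\<theta>\<bar> ^ hamming k x x' \<le> \<bar>P - Q\<bar> / 2 * \<bar>\<theta>\<bar> powr (dl * k)"
      by (simp add: mult_left_mono)
    then show ?thesis using mixture_bounds(2)[OF PQ \<theta>] by (meson add_left_mono order_trans)
  qed
  then have "(\<Sum>x'\<in>far_msgs k dl x. mixture P Q \<theta> (hamming k x x') ^ n)
      \<le> real (card (far_msgs k dl x)) * ((P + Q) / 2 + \<bar>P - Q\<bar> / 2 * \<bar>\<theta>\<bar> powr (dl * k)) ^ n"
    using sum_mono[where K = "far_msgs k dl x" and g = "\<lambda>_. ((P + Q) / 2 + \<bar>P - Q\<bar> / 2 * \<bar>\<theta>\<bar> powr (dl * k)) ^ n"]
    by (simp add: power_mono mixture_bounds(1)[OF PQ \<theta>])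
  also have "\<dots> \<le> 2 ^ k * ((P + Q) / 2 + \<bar>P - Q\<bar> / 2 * \<bar>\<theta>\<bar> powr (dl * k)) ^ n"
    using PQ by (intro mult_right_mono card_far_msgs) auto
  finally show ?thesis .
qed

lemma bhattacharyya_lt_1:
  assumes "0 < e" "e < 1 / 2"
  shows "2 * sqrt (e * (1 - e)) < 1"
proof -
  have "0 < (1 - 2 * e) ^ 2" using assms by simp
  then have "4 * (e * (1 - e)) < 1" by (simp add: power2_eq_square algebra_simps)
  then have "sqrt (4 * (e * (1 - e))) < 1" by simp
  then show ?thesis by (simp add: real_sqrt_mult)
qed

lemma ensemble_error_explicit:
  assumes e: "0 < e" "e < 1 / 2" and s: "1 < s" and dl: "0 \<le> dl" and \<rho>: "0 \<le> \<rho>" "\<rho> \<le> 1"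
    and lam: "0 < lam" "lam \<le> 1"
  defines "r \<equiv> e / (1 - e)" and "Z \<equiv> 2 * sqrt (e * (1 - e))" and "\<theta> \<equiv> 1 - 2 * \<rho>"
  defines "A0 \<equiv> 1 - e + e * r" and "A1 \<equiv> (1 - e) * r + e"
  shows "ensemble_error e \<rho> n k
    \<le> (1 + lam) ^ k * lam powr (- (dl * k)) * ((1 + Z) / 2 + (1 - Z) / 2 * \<bar>\<theta>\<bar>) ^ n
      + (1 - e + e * s) ^ n * s powr (- t)
      + r powr (- t) * 2 ^ k * ((A0 + A1) / 2 + \<bar>A0 - A1\<bar> / 2 * \<bar>\<theta>\<bar> powr (dl * k)) ^ n"
    (is "_ \<le> ?near + ?noise + r powr (- t) * 2 ^ k * ?far")
proof -
  have Z: "0 \<le> Z" "\<bar>1 - Z\<bar> = 1 - Z" using bhattacharyya_lt_1[OF e] e unfolding Z_def by auto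
  have A: "0 \<le> A0" "0 \<le> A1" unfolding A0_def A1_def r_def using e by auto
  have \<theta>: "\<bar>\<theta>\<bar> \<le> 1" unfolding \<theta>_def using \<rho> by simp
  have near: "(\<Sum>x'\<in>near_msgs k dl x. mixture 1 Z \<theta> (hamming k x x') ^ n) \<le> ?near"
    if "x \<in> bvecs k" for x
    using near_mixture_sum_bound[OF that zero_le_one Z(1) \<theta> lam, where dl = dl and n = n] Z(2) by simp
  have far: "(\<Sum>x'\<in>far_msgs k dl x. mixture A0 A1 \<theta> (hamming k x x') ^ n) \<le> 2 ^ k * ?far" for x
    by (rule far_mixture_sum_bound[OF A \<theta> dl])
  have "ensemble_error e \<rho> n k \<le> (\<Sum>x\<in>bvecs k.
      (\<Sum>x'\<in>near_msgs k dl x. mixture 1 Z \<theta> (hamming k x x') ^ n)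
    + ?noise + r powr (- t) * (\<Sum>x'\<in>far_msgs k dl x. mixture A0 A1 \<theta> (hamming k x x') ^ n)) / 2 ^ k"
    unfolding Z_def A0_def A1_def r_def \<theta>_def by (rule ensemble_error_le[OF e s dl \<rho>])
  also have "\<dots> \<le> (\<Sum>x\<in>bvecs k. ?near + ?noise + r powr (- t) * (2 ^ k * ?far)) / 2 ^ k"
    using near far e s by (intro divide_right_mono sum_mono add_mono mult_left_mono) auto
  also have "\<dots> = ?near + ?noise + r powr (- t) * 2 ^ k * ?far"
    by (simp add: card_bvecs)
  finally show ?thesis .
qed

(* Chernoff estimates.  The tilted Bernoulli(p) moment (1 - p + p s) s^(-a) is below 1 whenever
   s lies strictly between 1 and a/p, since its logarithm is at most (s - 1)(p s - a)/s. *)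
lemma tilted_mgf_lt_1:
  fixes p a s :: real
  assumes p: "0 \<le> p" "p \<le> 1" and a: "0 \<le> a" and s: "0 < s" and sign: "(s - 1) * (p * s - a) < 0"
  shows "(1 - p + p * s) * s powr (- a) < 1"
proof -
  have pos: "0 < 1 - p + p * s"
    using p s by (cases "p = 1") (auto intro: add_pos_nonneg)
  have "ln (1 - p + p * s) \<le> p * (s - 1)"
    using ln_le_minus_one[OF pos] by (simp add: algebra_simps)
  moreover have "- ln s \<le> (1 - s) / s"
    using ln_le_minus_one[of "1 / s"] s by (simp add: ln_div diff_divide_distrib)
  then have "a * (- ln s) \<le> a * ((1 - s) / s)" using a by (rule mult_left_mono)
  ultimately have "ln ((1 - p + p * s) * s powr (- a)) \<le> p * (s - 1) + a * ((1 - s) / s)"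
    using pos s by (simp add: ln_mult)
  also have "\<dots> = (s - 1) * (p * s - a) / s" using s by (simp add: field_simps)
  also have "\<dots> < 0" using sign s by (simp add: divide_neg_pos)
  finally show ?thesis using pos s by simp
qed

lemma chernoff_exponent_above:
  fixes p a :: real
  assumes "0 < p" "p < a" "p \<le> 1"
  obtains s where "1 < s" "(1 - p + p * s) * s powr (- a) < 1"
proof
  define s where "s = 1 + (a - p) / (2 * p)"
  show "1 < s" unfolding s_def using assms by simp
  have "p * s - a = - (a - p) / 2" unfolding s_def using assms by (simp add: field_simps)
  then have "(s - 1) * (p * s - a) < 0" using \<open>1 < s\<close> assms by (simp add: mult_pos_neg)
  then show "(1 - p + p * s) * s powr (- a) < 1"
    using assms \<open>1 < s\<close> by (intro tilted_mgf_lt_1) auto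
qed

lemma chernoff_exponent_below:
  fixes p a :: real
  assumes "0 < a" "a < p" "p \<le> 1"
  obtains s where "0 < s" "s < 1" "(1 - p + p * s) * s powr (- a) < 1"
proof
  define s where "s = (p + a) / (2 * p)"
  show "0 < s" "s < 1" unfolding s_def using assms by (auto simp: field_simps)
  have "p * s - a = (p - a) / 2" unfolding s_def using assms by (simp add: field_simps)
  then have "(s - 1) * (p * s - a) < 0" using \<open>s < 1\<close> assms by (simp add: mult_neg_pos)
  then show "(1 - p + p * s) * s powr (- a) < 1"
    using assms \<open>0 < s\<close> by (intro tilted_mgf_lt_1) auto
qed

lemma power_powr_scale:
  fixes \<tau> a X :: real
  assumes "0 < \<tau>"
  shows "X ^ N * \<tau> powr (- (a * N)) = (X * \<tau> powr (- a)) ^ N"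
  using assms by (simp add: power_mult_distrib powr_power mult.commute)

(* Markov's inequality for the tilted weight: any set of matrices on which tau^W(A) exceeds
   tau^(a n k) has probability at most the Chernoff bound. *)
lemma weight_tail_bound:
  assumes \<rho>: "0 \<le> \<rho>" "\<rho> \<le> 1" and \<tau>: "0 < \<tau>" and S: "S \<subseteq> bmats n k"
    and tail: "\<And>A. A \<in> S \<Longrightarrow> \<tau> powr (a * real (n * k)) \<le> \<tau> ^ mat_weight n k A"
  shows "(\<Sum>A\<in>S. bern_mat_prob \<rho> n k A) \<le> ((1 - \<rho> + \<rho> * \<tau>) * \<tau> powr (- a)) ^ (n * k)"
proof -
  define c where "c = \<tau> powr (- (a * real (n * k)))"
  have c: "0 \<le> c" unfolding c_def by simp
  have "1 \<le> \<tau> ^ mat_weight n k A * c" if "A \<in> S" for A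
  proof -
    have "1 = \<tau> powr (a * real (n * k)) * c" unfolding c_def using \<tau> by (simp flip: powr_add)
    also have "\<dots> \<le> \<tau> ^ mat_weight n k A * c" using tail[OF that] c by (rule mult_right_mono)
    finally show ?thesis .
  qed
  then have "(\<Sum>A\<in>S. bern_mat_prob \<rho> n k A) \<le> (\<Sum>A\<in>S. bern_mat_prob \<rho> n k A * (\<tau> ^ mat_weight n k A * c))"
    using bern_mat_prob_nonneg[OF \<rho>] by (intro sum_mono) (metis mult.right_neutral mult_left_mono)
  also have "\<dots> \<le> (\<Sum>A\<in>bmats n k. bern_mat_prob \<rho> n k A * (\<tau> ^ mat_weight n k A * c))"
    using S bern_mat_prob_nonneg[OF \<rho>] \<tau> c by (intro sum_mono2[OF finite_bmats]) auto
  also have "\<dots> = (1 - \<rho> + \<rho> * \<tau>) ^ (n * k) * c"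
    by (simp add: mult.assoc[symmetric] sum_distrib_right[symmetric] bern_weight_mgf)
  also have "\<dots> = ((1 - \<rho> + \<rho> * \<tau>) * \<tau> powr (- a)) ^ (n * k)"
    unfolding c_def using \<tau> by (rule power_powr_scale)
  finally show ?thesis .
qed

definition typical_mass :: "real \<Rightarrow> real \<Rightarrow> nat \<Rightarrow> nat \<Rightarrow> real" where
  "typical_mass \<rho> \<eta> n k = (\<Sum>A\<in>typical_mats \<rho> \<eta> n k. bern_mat_prob \<rho> n k A)"

lemma typical_mass_lower_bound:
  assumes \<rho>: "0 \<le> \<rho>" "\<rho> \<le> 1" and \<tau>1: "1 \<le> \<tau>1" and \<tau>2: "0 < \<tau>2" "\<tau>2 \<le> 1"
    and a2: "\<rho> - \<eta> \<le> a2" and N: "0 < n * k"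
  shows "1 - ((1 - \<rho> + \<rho> * \<tau>1) * \<tau>1 powr (- (\<rho> + \<eta>))) ^ (n * k)
           - ((1 - \<rho> + \<rho> * \<tau>2) * \<tau>2 powr (- a2)) ^ (n * k)
         \<le> typical_mass \<rho> \<eta> n k"
proof -
  define N where "N = real (n * k)"
  define T where "T = typical_mats \<rho> \<eta> n k"
  define U where "U = {A \<in> bmats n k. (\<rho> + \<eta>) * N \<le> real (mat_weight n k A)}"
  define L where "L = {A \<in> bmats n k. real (mat_weight n k A) \<le> a2 * N}"
  have fin: "finite U" "finite L" unfolding U_def L_def using finite_bmats by auto
  have bern: "0 \<le> bern_mat_prob \<rho> n k A" for A using bern_mat_prob_nonneg[OF \<rho>] .
  have "bmats n k - T \<subseteq> U \<union> L"
  proof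
    fix A assume A: "A \<in> bmats n k - T"
    then have "\<not> \<bar>real (mat_weight n k A) / N - \<rho>\<bar> < \<eta>"
      unfolding T_def typical_mats_def N_def by auto
    then have "\<rho> + \<eta> \<le> real (mat_weight n k A) / N \<or> real (mat_weight n k A) / N \<le> a2"
      using a2 by linarith
    moreover have "0 < N" using N unfolding N_def by simp
    ultimately have "(\<rho> + \<eta>) * N \<le> real (mat_weight n k A) \<or> real (mat_weight n k A) \<le> a2 * N"
      by (simp add: le_divide_eq divide_le_eq)
    then show "A \<in> U \<union> L" using A unfolding U_def L_def by auto
  qed
  then have "(\<Sum>A\<in>bmats n k - T. bern_mat_prob \<rho> n k A) \<le> (\<Sum>A\<in>U \<union> L. bern_mat_prob \<rho> n k A)"
    using fin bern by (intro sum_mono2) auto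
  also have "\<dots> \<le> (\<Sum>A\<in>U. bern_mat_prob \<rho> n k A) + (\<Sum>A\<in>L. bern_mat_prob \<rho> n k A)"
    using fin bern by (simp add: sum_Un sum_nonneg)
  moreover have "(\<Sum>A\<in>U. bern_mat_prob \<rho> n k A) \<le> ((1 - \<rho> + \<rho> * \<tau>1) * \<tau>1 powr (- (\<rho> + \<eta>))) ^ (n * k)"
    using \<rho> \<tau>1 by (intro weight_tail_bound) (auto simp: U_def N_def powr_realpow[symmetric] intro: powr_mono)
  moreover have "(\<Sum>A\<in>L. bern_mat_prob \<rho> n k A) \<le> ((1 - \<rho> + \<rho> * \<tau>2) * \<tau>2 powr (- a2)) ^ (n * k)"
    using \<rho> \<tau>2 by (intro weight_tail_bound) (auto simp: L_def N_def powr_realpow[symmetric] intro: powr_mono')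
  moreover have "T \<subseteq> bmats n k" unfolding T_def typical_mats_def by auto
  then have "(\<Sum>A\<in>bmats n k. bern_mat_prob \<rho> n k A)
      = typical_mass \<rho> \<eta> n k + (\<Sum>A\<in>bmats n k - T. bern_mat_prob \<rho> n k A)"
    unfolding typical_mass_def T_def by (simp add: sum.subset_diff[OF _ finite_bmats])
  ultimately show ?thesis using bern_mat_prob_sum[of \<rho> n k] by linarith
qed

lemma typical_mass_eventually_half:
  assumes \<rho>: "0 < \<rho>" "\<rho> < 1" and \<eta>: "0 < \<eta>" and k: "filterlim k at_top sequentially"
  shows "eventually (\<lambda>n. 1 / 2 \<le> typical_mass \<rho> \<eta> n (k n)) sequentially"
proof -
  obtain \<tau>1 where \<tau>1: "1 < \<tau>1" and q1: "(1 - \<rho> + \<rho> * \<tau>1) * \<tau>1 powr (- (\<rho> + \<eta>)) < 1"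
    using chernoff_exponent_above[of \<rho> "\<rho> + \<eta>"] \<rho> \<eta> by auto
  define a2 where "a2 = \<rho> - min \<eta> (\<rho> / 2)"
  have a2: "0 < a2" "a2 < \<rho>" "\<rho> - \<eta> \<le> a2" unfolding a2_def using \<rho> \<eta> by (auto simp: min_def)
  obtain \<tau>2 where \<tau>2: "0 < \<tau>2" "\<tau>2 < 1" and q2: "(1 - \<rho> + \<rho> * \<tau>2) * \<tau>2 powr (- a2) < 1"
    using chernoff_exponent_below[OF a2(1,2)] \<rho> by auto
  define q1 q2 where "q1 = (1 - \<rho> + \<rho> * \<tau>1) * \<tau>1 powr (- (\<rho> + \<eta>))"
    and "q2 = (1 - \<rho> + \<rho> * \<tau>2) * \<tau>2 powr (- a2)"
  have q: "0 \<le> q1" "q1 < 1" "0 \<le> q2" "q2 < 1"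
    unfolding q1_def q2_def using q1 q2 \<rho> \<tau>1 \<tau>2 by auto
  have "eventually (\<lambda>n. q1 ^ n < 1 / 4) sequentially"
    by (rule order_tendstoD(2)[OF LIMSEQ_power_zero]) (use q in auto)
  moreover have "eventually (\<lambda>n. q2 ^ n < 1 / 4) sequentially"
    by (rule order_tendstoD(2)[OF LIMSEQ_power_zero]) (use q in auto)
  moreover have "eventually (\<lambda>n. 1 \<le> k n) sequentially" using k by (simp add: filterlim_at_top)
  moreover have "eventually (\<lambda>n. 1 \<le> n) sequentially" by (rule eventually_ge_at_top)
  ultimately show ?thesis
  proof eventually_elim
    case (elim n)
    then have nk: "0 < n * k n" "n \<le> n * k n" by simp_all
    have "q1 ^ (n * k n) \<le> q1 ^ n" "q2 ^ (n * k n) \<le> q2 ^ n"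
      using q nk(2) by (simp_all add: power_decreasing)
    moreover have "1 - q1 ^ (n * k n) - q2 ^ (n * k n) \<le> typical_mass \<rho> \<eta> n (k n)"
      unfolding q1_def q2_def using \<rho> \<tau>1 \<tau>2 a2(3) nk(1) by (intro typical_mass_lower_bound) auto
    ultimately show ?case using elim by linarith
  qed
qed

(* The rate condition R < 1 - h(e) leaves room for a noise threshold e + delta such that the
   far-competitor exponent stays below 1. *)
lemma far_exponent:
  fixes e R :: real
  assumes e: "0 < e" "e < 1 / 2" and R: "R < 1 - bin_entropy e"
  obtains \<delta> where "0 < \<delta>" "(e / (1 - e)) powr (- (e + \<delta>)) * 2 powr R * (1 / (2 * (1 - e))) < 1"
proof
  define r where "r = e / (1 - e)"
  have lr: "ln r < 0" unfolding r_def using e by (simp add: ln_div)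
  define C where "C = 1 - bin_entropy e - R"
  have C: "0 < C" unfolding C_def using R by simp
  define \<delta> where "\<delta> = C * ln 2 / (2 * (- ln r))"
  show "0 < \<delta>" unfolding \<delta>_def using C lr by (intro divide_pos_pos mult_pos_pos) auto
  have h: "bin_entropy e * ln 2 = - e * ln e - (1 - e) * ln (1 - e)"
    unfolding bin_entropy_def log_def by (simp add: field_simps)
  have lnr: "ln r = ln e - ln (1 - e)" unfolding r_def using e by (simp add: ln_div)
  have pos: "0 < r powr (- (e + \<delta>)) * 2 powr R * (1 / (2 * (1 - e)))"
    unfolding r_def using e by simp
  have "ln (2 * (1 - e)) = ln 2 + ln (1 - e)" using ln_mult[of 2 "1 - e"] e by simp
  then have "ln (r powr (- (e + \<delta>)) * 2 powr R * (1 / (2 * (1 - e))))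
      = - (e + \<delta>) * ln r + R * ln 2 - ln 2 - ln (1 - e)"
    unfolding r_def using e by (simp add: ln_mult ln_div)
  also have "\<dots> = bin_entropy e * ln 2 - \<delta> * ln r + R * ln 2 - ln 2"
    unfolding h lnr by (simp add: algebra_simps)
  also have "\<dots> = - C * ln 2 / 2"
    unfolding \<delta>_def using lr by (simp add: C_def field_simps)
  also have "\<dots> < 0" using C by simp
  finally show "r powr (- (e + \<delta>)) * 2 powr R * (1 / (2 * (1 - e))) < 1"
    using pos by simp
qed

(* Given the near exponent beta < 1, the radius dl can be chosen so small that the count of
   near messages, (1 + lam)^k lam^(-dl k), does not destroy it. *)
lemma near_exponent:
  fixes \<beta> R :: real
  assumes \<beta>: "0 < \<beta>" "\<beta> < 1" and R: "0 < R"
  obtains lam dl where "0 < lam" "lam \<le> 1" "0 < dl" "((1 + lam) * lam powr (- dl)) powr R * \<beta> < 1"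
proof
  have lb: "ln \<beta> < 0" using \<beta> by simp
  define lam where "lam = min (1 / 2) (- ln \<beta> / (3 * R))"
  show lam: "0 < lam" "lam \<le> 1" unfolding lam_def using lb R by (auto simp: min_def divide_neg_pos)
  have lamR: "R * lam \<le> - ln \<beta> / 3" unfolding lam_def using R by (auto simp: min_def field_simps)
  have llam: "ln lam < 0" using lam unfolding lam_def by (auto simp: min_def)
  define dl where "dl = - ln \<beta> / (3 * R * (- ln lam))"
  show "0 < dl" unfolding dl_def using lb llam R by (intro divide_pos_pos mult_pos_pos) auto
  define \<omega> where "\<omega> = (1 + lam) * lam powr (- dl)"
  have \<omega>: "0 < \<omega>" unfolding \<omega>_def using lam by simp
  have "ln (\<omega> powr R * \<beta>) = R * ln \<omega> + ln \<beta>" using \<omega> \<beta> by (simp add: ln_mult ln_powr)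
  also have "ln \<omega> = ln (1 + lam) + (- dl) * ln lam" unfolding \<omega>_def using lam by (simp add: ln_mult)
  finally have "ln (\<omega> powr R * \<beta>) = R * ln (1 + lam) + R * (dl * (- ln lam)) + ln \<beta>"
    by (simp add: algebra_simps)
  also have "R * (dl * (- ln lam)) = - ln \<beta> / 3"
    unfolding dl_def using llam R by (simp add: field_simps)
  also have "R * ln (1 + lam) \<le> R * lam"
    using ln_add_one_self_le_self[of lam] lam R by (intro mult_left_mono) auto
  then have "R * ln (1 + lam) + - ln \<beta> / 3 + ln \<beta> < 0" using lamR lb by linarith
  finally have "ln (\<omega> powr R * \<beta>) < 0" .
  moreover have "0 < \<omega> powr R * \<beta>" using \<omega> \<beta> by simp
  ultimately have "\<omega> powr R * \<beta> < 1" by simp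
  then show "((1 + lam) * lam powr (- dl)) powr R * \<beta> < 1" unfolding \<omega>_def .
qed

lemma power_le_rate_power:
  fixes \<omega> R :: real
  assumes "1 \<le> \<omega>" "real k \<le> R * real n"
  shows "\<omega> ^ k \<le> (\<omega> powr R) ^ n"
proof -
  have "\<omega> ^ k = \<omega> powr real k" using assms by (simp add: powr_realpow)
  also have "\<dots> \<le> \<omega> powr (R * real n)" using assms by (intro powr_mono) auto
  also have "\<dots> = (\<omega> powr R) ^ n" using assms by (simp add: powr_power mult.commute)
  finally show ?thesis .
qed

lemma ensemble_error_geometric:
  assumes e: "0 < e" "e < 1 / 2" and s: "1 < s" and \<rho>: "0 \<le> \<rho>" "\<rho> \<le> 1"
    and lam: "0 < lam" "lam \<le> 1" and dl: "0 \<le> dl" and k: "real k \<le> R * real n"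
  defines "r \<equiv> e / (1 - e)" and "Z \<equiv> 2 * sqrt (e * (1 - e))" and "\<theta> \<equiv> 1 - 2 * \<rho>"
  defines "A0 \<equiv> 1 - e + e * r" and "A1 \<equiv> (1 - e) * r + e"
  shows "ensemble_error e \<rho> n k
    \<le> (((1 + lam) * lam powr (- dl)) powr R * ((1 + Z) / 2 + (1 - Z) / 2 * \<bar>\<theta>\<bar>)) ^ n
      + ((1 - e + e * s) * s powr (- a)) ^ n
      + (r powr (- a) * 2 powr R * ((A0 + A1) / 2 + \<bar>A0 - A1\<bar> / 2 * \<bar>\<theta>\<bar> powr (dl * k))) ^ n"
    (is "_ \<le> (?\<omega> powr R * ?\<beta>) ^ n + ?noise ^ n + (r powr (- a) * 2 powr R * ?far) ^ n")
proof -
  have r: "0 < r" unfolding r_def using e by simp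
  have "lam powr 0 \<le> lam powr (- dl)" using lam dl by (intro powr_mono') auto
  then have "1 \<le> lam powr (- dl)" using lam by simp
  then have "1 * 1 \<le> ?\<omega>" using lam by (intro mult_mono) auto
  then have \<omega>: "1 \<le> ?\<omega>" by simp
  have \<beta>: "0 \<le> ?\<beta>" unfolding Z_def \<theta>_def using bhattacharyya_lt_1[OF e] e by auto
  have far: "0 \<le> ?far" unfolding A0_def A1_def r_def using e by auto
  have "ensemble_error e \<rho> n k
    \<le> (1 + lam) ^ k * lam powr (- (dl * k)) * ?\<beta> ^ n
      + (1 - e + e * s) ^ n * s powr (- (a * n))
      + r powr (- (a * n)) * 2 ^ k * ?far ^ n"
    unfolding r_def Z_def \<theta>_def A0_def A1_def by (rule ensemble_error_explicit[OF e s dl \<rho> lam])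
  also have "(1 + lam) ^ k * lam powr (- (dl * k)) = ?\<omega> ^ k"
    by (rule power_powr_scale[OF lam(1)])
  also have "(1 - e + e * s) ^ n * s powr (- (a * n)) = ?noise ^ n"
    using s by (intro power_powr_scale) auto
  also have "r powr (- (a * n)) = (r powr (- a)) ^ n"
    using power_powr_scale[OF r, of 1 n a] by simp
  also have "?\<omega> ^ k * ?\<beta> ^ n \<le> (?\<omega> powr R * ?\<beta>) ^ n"
    using power_le_rate_power[OF \<omega> k] \<beta> by (simp add: power_mult_distrib mult_right_mono)
  also have "(r powr (- a)) ^ n * 2 ^ k * ?far ^ n \<le> (r powr (- a) * 2 powr R * ?far) ^ n"
    using power_le_rate_power[of 2 k R n] k far by (simp add: power_mult_distrib mult_left_mono mult_right_mono)
  finally show ?thesis by simp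
qed

lemma power_seq_tendsto_0:
  fixes f :: "nat \<Rightarrow> real"
  assumes f: "f \<longlonglongrightarrow> L" and L: "L < 1" and nonneg: "\<And>n. 0 \<le> f n"
  shows "(\<lambda>n. f n ^ n) \<longlonglongrightarrow> 0"
proof -
  define c where "c = (L + 1) / 2"
  have "0 \<le> L" by (rule LIMSEQ_le_const[OF f]) (use nonneg in auto)
  then have c: "L < c" "0 \<le> c" "c < 1" unfolding c_def using L by auto
  have "eventually (\<lambda>n. f n < c) sequentially" by (rule order_tendstoD(2)[OF f c(1)])
  then have upper: "eventually (\<lambda>n. f n ^ n \<le> c ^ n) sequentially"
    by eventually_elim (intro power_mono, use nonneg in auto)
  have lower: "eventually (\<lambda>n. 0 \<le> f n ^ n) sequentially" by (simp add: nonneg)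
  have "(\<lambda>n. c ^ n) \<longlonglongrightarrow> 0" using c by (intro LIMSEQ_power_zero) auto
  then show ?thesis by (rule tendsto_sandwich[OF lower upper tendsto_const])
qed

lemma abs_powr_tendsto_0:
  fixes \<theta> dl :: real and k :: "nat \<Rightarrow> nat"
  assumes "\<bar>\<theta>\<bar> < 1" "0 < dl" and k: "filterlim k at_top sequentially"
  shows "(\<lambda>n. \<bar>\<theta>\<bar> powr (dl * k n)) \<longlonglongrightarrow> 0"
proof -
  have c: "\<bar>\<theta>\<bar> powr dl < 1" using powr_less_mono2[OF assms(2) _ assms(1)] by simp
  have lim: "(\<lambda>n. (\<bar>\<theta>\<bar> powr dl) ^ k n) \<longlonglongrightarrow> 0"
    by (rule filterlim_compose[OF LIMSEQ_power_zero k]) (use c in simp)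
  have "\<bar>\<theta>\<bar> powr (dl * k n) \<le> (\<bar>\<theta>\<bar> powr dl) ^ k n" for n
    by (cases "\<theta> = 0") (simp_all add: powr_power mult.commute)
  then have upper: "eventually (\<lambda>n. \<bar>\<theta>\<bar> powr (dl * k n) \<le> (\<bar>\<theta>\<bar> powr dl) ^ k n) sequentially"
    by simp
  have lower: "eventually (\<lambda>n. 0 \<le> \<bar>\<theta>\<bar> powr (dl * k n)) sequentially" by simp
  show ?thesis by (rule tendsto_sandwich[OF lower upper tendsto_const lim])
qed

lemma ensemble_error_nonneg: "0 < e \<Longrightarrow> e < 1 \<Longrightarrow> 0 \<le> \<rho> \<Longrightarrow> \<rho> \<le> 1 \<Longrightarrow> 0 \<le> ensemble_error e \<rho> n k"
  unfolding ensemble_error_def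
  by (intro sum_nonneg mult_nonneg_nonneg bern_mat_prob_nonneg prob_error_nonneg)

lemma near_ratio_bounds:
  fixes Z \<theta> :: real
  assumes Z: "0 \<le> Z" "Z < 1" and \<theta>: "\<bar>\<theta>\<bar> < 1"
  shows "0 < (1 + Z) / 2 + (1 - Z) / 2 * \<bar>\<theta>\<bar>" "(1 + Z) / 2 + (1 - Z) / 2 * \<bar>\<theta>\<bar> < 1"
proof -
  show "0 < (1 + Z) / 2 + (1 - Z) / 2 * \<bar>\<theta>\<bar>" using Z by (auto intro: add_pos_nonneg)
  have "(1 - Z) / 2 * \<bar>\<theta>\<bar> < (1 - Z) / 2 * 1" using Z \<theta> by (intro mult_strict_left_mono) auto
  then have "(1 + Z) / 2 + (1 - Z) / 2 * \<bar>\<theta>\<bar> < (1 + Z) / 2 + (1 - Z) / 2" by simp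
  also have "\<dots> = 1" by (simp add: add_divide_distrib[symmetric])
  finally show "(1 + Z) / 2 + (1 - Z) / 2 * \<bar>\<theta>\<bar> < 1" .
qed

lemma far_term_vanishes:
  fixes c M D \<theta> dl :: real and k :: "nat \<Rightarrow> nat"
  assumes nonneg: "0 \<le> c" "0 \<le> M" "0 \<le> D" and rate: "c * M < 1"
    and \<theta>: "\<bar>\<theta>\<bar> < 1" and dl: "0 < dl" and k: "filterlim k at_top sequentially"
  shows "(\<lambda>n. (c * (M + D * \<bar>\<theta>\<bar> powr (dl * k n))) ^ n) \<longlonglongrightarrow> 0"
proof -
  have "(\<lambda>n. c * (M + D * \<bar>\<theta>\<bar> powr (dl * k n))) \<longlonglongrightarrow> c * (M + D * 0)"
    using \<theta> dl k by (intro tendsto_intros abs_powr_tendsto_0)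
  then have "(\<lambda>n. c * (M + D * \<bar>\<theta>\<bar> powr (dl * k n))) \<longlonglongrightarrow> c * M" by simp
  then show ?thesis by (rule power_seq_tendsto_0[OF _ rate]) (use nonneg in simp)
qed

lemma ensemble_error_vanishes:
  assumes e: "0 < e" "e < 1 / 2" and R: "0 < R" "R < 1 - bin_entropy e" and \<rho>: "0 < \<rho>" "\<rho> < 1"
    and k_le: "\<And>n. real (k n) \<le> R * real n" and k: "filterlim k at_top sequentially"
  shows "(\<lambda>n. ensemble_error e \<rho> n (k n)) \<longlonglongrightarrow> 0"
proof -
  define r Z \<theta> where "r = e / (1 - e)" and "Z = 2 * sqrt (e * (1 - e))" and "\<theta> = 1 - 2 * \<rho>"
  define A0 A1 where "A0 = 1 - e + e * r" and "A1 = (1 - e) * r + e"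
  obtain \<delta> where \<delta>: "0 < \<delta>" and rate: "r powr (- (e + \<delta>)) * 2 powr R * (1 / (2 * (1 - e))) < 1"
    using far_exponent[OF e R(2)] unfolding r_def by blast
  have mean: "(A0 + A1) / 2 = 1 / (2 * (1 - e))"
    unfolding A0_def A1_def r_def using e by (simp add: field_simps)
  have far_rate: "r powr (- (e + \<delta>)) * 2 powr R * ((A0 + A1) / 2) < 1"
    unfolding mean by (rule rate)
  obtain s where s: "1 < s" and noise_rate: "(1 - e + e * s) * s powr (- (e + \<delta>)) < 1"
    using chernoff_exponent_above[of e "e + \<delta>"] e \<delta> by auto
  define \<beta> where "\<beta> = (1 + Z) / 2 + (1 - Z) / 2 * \<bar>\<theta>\<bar>"
  have Z: "0 \<le> Z" "Z < 1" unfolding Z_def using bhattacharyya_lt_1[OF e] e by auto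
  have \<theta>: "\<bar>\<theta>\<bar> < 1" unfolding \<theta>_def using \<rho> by simp
  have \<beta>: "0 < \<beta>" "\<beta> < 1" unfolding \<beta>_def using near_ratio_bounds[OF Z \<theta>] by auto
  obtain lam dl where lam: "0 < lam" "lam \<le> 1" and dl: "0 < dl"
    and near_rate: "((1 + lam) * lam powr (- dl)) powr R * \<beta> < 1"
    using near_exponent[OF \<beta> R(1)] by blast
  define far where "far n = r powr (- (e + \<delta>)) * 2 powr R * ((A0 + A1) / 2 + \<bar>A0 - A1\<bar> / 2 * \<bar>\<theta>\<bar> powr (dl * k n))" for n
  have bound: "ensemble_error e \<rho> n (k n)
      \<le> (((1 + lam) * lam powr (- dl)) powr R * \<beta>) ^ n + ((1 - e + e * s) * s powr (- (e + \<delta>))) ^ n + far n ^ n" for n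
    unfolding far_def \<beta>_def r_def Z_def \<theta>_def A0_def A1_def
    using \<rho> lam dl k_le by (intro ensemble_error_geometric[OF e s]) auto
  have far_term: "(\<lambda>n. far n ^ n) \<longlonglongrightarrow> 0"
    unfolding far_def using far_rate \<theta> dl k e
    by (intro far_term_vanishes) (auto simp: A0_def A1_def r_def)
  have near_term: "(\<lambda>n. (((1 + lam) * lam powr (- dl)) powr R * \<beta>) ^ n) \<longlonglongrightarrow> 0"
    using near_rate \<beta> by (intro LIMSEQ_power_zero) auto
  have noise_term: "(\<lambda>n. ((1 - e + e * s) * s powr (- (e + \<delta>))) ^ n) \<longlonglongrightarrow> 0"
    using noise_rate e s by (intro LIMSEQ_power_zero) auto
  have lim: "(\<lambda>n. (((1 + lam) * lam powr (- dl)) powr R * \<beta>) ^ n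
      + ((1 - e + e * s) * s powr (- (e + \<delta>))) ^ n + far n ^ n) \<longlonglongrightarrow> 0"
    using tendsto_add[OF tendsto_add[OF near_term noise_term] far_term] by simp
  have lower: "eventually (\<lambda>n. 0 \<le> ensemble_error e \<rho> n (k n)) sequentially"
    using e \<rho> by (simp add: ensemble_error_nonneg)
  have upper: "eventually (\<lambda>n. ensemble_error e \<rho> n (k n) \<le> (((1 + lam) * lam powr (- dl)) powr R * \<beta>) ^ n
      + ((1 - e + e * s) * s powr (- (e + \<delta>))) ^ n + far n ^ n) sequentially"
    using bound by simp
  show ?thesis by (rule tendsto_sandwich[OF lower upper tendsto_const lim])
qed

lemma typical_avg_error_bounds:
  assumes e: "0 < e" "e < 1" and \<rho>: "0 \<le> \<rho>" "\<rho> \<le> 1" and mass: "1 / 2 \<le> typical_mass \<rho> \<eta> n k"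
  shows "0 \<le> typical_avg_error e \<rho> \<eta> n k" "typical_avg_error e \<rho> \<eta> n k \<le> 2 * ensemble_error e \<rho> n k"
proof -
  define num where "num = (\<Sum>A\<in>typical_mats \<rho> \<eta> n k. bern_mat_prob \<rho> n k A * prob_error e n k A)"
  have terms: "0 \<le> bern_mat_prob \<rho> n k A * prob_error e n k A" for A
    using e \<rho> by (intro mult_nonneg_nonneg bern_mat_prob_nonneg prob_error_nonneg)
  have num: "0 \<le> num" "num \<le> ensemble_error e \<rho> n k"
    unfolding num_def ensemble_error_def using terms
    by (auto intro: sum_nonneg sum_mono2[OF finite_bmats] simp: typical_mats_def)
  have avg: "typical_avg_error e \<rho> \<eta> n k = num / typical_mass \<rho> \<eta> n k"
    unfolding typical_avg_error_def typical_mass_def num_def ..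
  show "0 \<le> typical_avg_error e \<rho> \<eta> n k" unfolding avg using num mass by simp
  have "num / typical_mass \<rho> \<eta> n k \<le> num / (1 / 2)"
    using num mass by (intro divide_left_mono) auto
  then show "typical_avg_error e \<rho> \<eta> n k \<le> 2 * ensemble_error e \<rho> n k"
    unfolding avg using num by simp
qed

lemma floor_rate_facts:
  fixes R :: real
  assumes "0 < R"
  shows "real (nat \<lfloor>R * real n\<rfloor>) \<le> R * real n"
    and "filterlim (\<lambda>n. nat \<lfloor>R * real n\<rfloor>) at_top sequentially"
proof -
  have "0 \<le> R * real n" using assms by simp
  then show "real (nat \<lfloor>R * real n\<rfloor>) \<le> R * real n" by linarith
  have "filterlim (\<lambda>n. R * real n) at_top sequentially"
    using assms by (intro filterlim_tendsto_pos_mult_at_top[OF tendsto_const] filterlim_real_sequentially)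
  then show "filterlim (\<lambda>n. nat \<lfloor>R * real n\<rfloor>) at_top sequentially"
    by (intro filterlim_compose[OF filterlim_nat_sequentially] filterlim_compose[OF filterlim_floor_sequentially])
qed

theorem proposition1:
  fixes \<epsilon> R \<rho> \<eta> :: real
  assumes "0 < \<epsilon>" "\<epsilon> < 1 / 2"
    and "0 < R" "R < 1 - bin_entropy \<epsilon>"
    and "0 < \<rho>" "\<rho> < 1"
    and "0 < \<eta>"
  shows "(\<lambda>n. typical_avg_error \<epsilon> \<rho> \<eta> n (nat \<lfloor>R * real n\<rfloor>)) \<longlonglongrightarrow> 0"
proof -
  note e = assms(1,2) and R = assms(3,4) and \<rho> = assms(5,6)
  define k where "k n = nat \<lfloor>R * real n\<rfloor>" for n
  have k: "real (k n) \<le> R * real n" "filterlim k at_top sequentially" for n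
    unfolding k_def using floor_rate_facts[OF R(1)] by auto
  have "(\<lambda>n. ensemble_error \<epsilon> \<rho> n (k n)) \<longlonglongrightarrow> 0"
    by (rule ensemble_error_vanishes[OF e R \<rho> k])
  then have lim: "(\<lambda>n. 2 * ensemble_error \<epsilon> \<rho> n (k n)) \<longlonglongrightarrow> 0"
    using tendsto_mult_right_zero by blast
  have mass: "eventually (\<lambda>n. 1 / 2 \<le> typical_mass \<rho> \<eta> n (k n)) sequentially"
    by (rule typical_mass_eventually_half[OF \<rho> assms(7) k(2)])
  have lower: "eventually (\<lambda>n. 0 \<le> typical_avg_error \<epsilon> \<rho> \<eta> n (k n)) sequentially"
    and upper: "eventually (\<lambda>n. typical_avg_error \<epsilon> \<rho> \<eta> n (k n) \<le> 2 * ensemble_error \<epsilon> \<rho> n (k n)) sequentially"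
    using mass e \<rho> by (auto elim!: eventually_mono intro: typical_avg_error_bounds)
  show ?thesis
    using tendsto_sandwich[OF lower upper tendsto_const lim] unfolding k_def .
qed

end
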